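(* In any symmetric equilibrium of the two-player game, in which both players use the mixed strategy $(\rho,\sigma)$, the function $\rho$ is continuous at every $t>0$.
   Context: Two-player game. Two players $i\in\{1,2\}$. A state $\omega\in\{H,L\}$ is drawn once and stays fixed; players share the prior $p_0=\Pr(\omega=H)\in(0,1)$. Time is continuous, $t\in[0,\infty)$, no discounting. At any time a player who has not yet acted either takes an irreversible action $x\in\{S,R\}$ (after which she is out of the game) or continues acquiring information at flow cost $c>0$ per unit of time. Action $S$ yields $0$. Action $R$ taken in state $\omega$ yields $u_\omega$ if the opponent has not taken $R$ before or at that instant, $u_\omega-\bar\Delta_\omega$ if the opponent took $R$ strictly earlier, and $u_\omega-\underline\Delta_\omega$ if both take $R$ at the same instant. Standing assumptions: (A1) $\bar\Delta_\omega>\underline\Delta_\omega>0$ for $\omega\in\{H,L\}$; (A2) $u_L<0<u_H-\bar\Delta_H$. While acquiring information, independently across players, in state $H$ an $H$-revealing signal (revealing $\omega=H$) arrives at Poisson rate $a$, and in state $L$ an $L$-revealing signal (revealing $\omega=L$) arrives at Poisson rate $b$, with $b>a>0$. Signals and actions are private (a player never observes the opponent's signals or actions). Absent a revealing signal, a player's belief $p_t=\Pr(H)$ satisfies $dp_t/dt=(b-a)p_t(1-p_t)$, i.e. $\frac{p_t}{1-p_t}=L_t:=\frac{p_0}{1-p_0}e^{(b-a)t}$. A player who receives an $H$-revealing signal takes $R$ immediately; one who receives an $L$-revealing signal takes $S$ immediately. A mixed strategy is a pair $(\rho,\sigma)$ of non-decreasing right-continuous functions $[0,\infty)\to[0,1]$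 with $\rho(t)+\sigma(t)\le 1$ for all $t$, where $\rho(t)$ (resp. $\sigma(t)$) is the probability that the player has stopped and taken $R$ (resp. $S$) at or before time $t$ conditional on having received no revealing signal. A pure strategy $(T,x)$ means: absent a revealing signal, acquire information until time $T$ and then take action $x$. A player's expected payoff is her expected action payoff minus $c$ times her expected time spent acquiring information, given the opponent's strategy and the signal processes. An equilibrium is a strategy pair in which each player's strategy maximizes her expected payoff given the other's; it is symmetric if both use the same strategy. *)

theory Defs
  imports "HOL-Analysis.Analysis"
begin

text \<open>Parameters of the game: prior p0, signal rates a (in H) and b (in L), flow cost c,
  stand-alone payoffs uH, uL, penalties dbH, dbL (opponent took R strictly earlier),
  dlH, dlL (simultaneous R).\<close>
record params =
  p0 :: real
  ra :: real
  rb :: real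
  cost :: real
  uH :: real
  uL :: real
  dbH :: real
  dbL :: real
  dlH :: real
  dlL :: real

definition standing :: "params \<Rightarrow> bool" where
  "standing g \<longleftrightarrow> 0 < p0 g \<and> p0 g < 1 \<and> cost g > 0 \<and> 0 < ra g \<and> ra g < rb g
     \<and> dbH g > dlH g \<and> dlH g > 0 \<and> dbL g > dlL g \<and> dlL g > 0
     \<and> uL g < 0 \<and> 0 < uH g - dbH g"

definition is_strategy :: "(real \<Rightarrow> real) \<Rightarrow> (real \<Rightarrow> real) \<Rightarrow> bool" where
  "is_strategy \<rho> \<sigma> \<longleftrightarrow> mono_on {0..} \<rho> \<and> mono_on {0..} \<sigma>
     \<and> (\<forall>t\<ge>0. continuous (at_right t) \<rho> \<and> continuous (at_right t) \<sigma>)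
     \<and> (\<forall>t\<ge>0. 0 \<le> \<rho> t \<and> \<rho> t \<le> 1 \<and> 0 \<le> \<sigma> t \<and> \<sigma> t \<le> 1 \<and> \<rho> t + \<sigma> t \<le> 1)"

text \<open>Lebesgue--Stieltjes measure d rho on the real line (rho extended by 0 on negative times,
  so an atom rho(0) sits at time 0).\<close>
definition stieltjes :: "(real \<Rightarrow> real) \<Rightarrow> real measure" where
  "stieltjes F = interval_measure (\<lambda>t. if t < 0 then 0 else F t)"

text \<open>Probability that the opponent (strategy rho, sigma) has taken R at or before t
  (cumH, cumL) resp. strictly before t (cumH_lt, cumL_lt), in state H resp. L.
  In state H the opponent takes R either by her plan absent a signal, or upon an H-signal
  (rate a); in state L only by her plan absent an L-signal (rate b).\<close>
definition cumH :: "params \<Rightarrow> (real \<Rightarrow> real) \<Rightarrow> (real \<Rightarrow> real) \<Rightarrow> real \<Rightarrow> real" where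
  "cumH g \<rho> \<sigma> t = (\<integral>x. indicator {0..t} x * exp (- ra g * x) \<partial>stieltjes \<rho>)
     + (LBINT x:{0..t}. ra g * exp (- ra g * x) * (1 - \<rho> x - \<sigma> x))"

definition cumH_lt :: "params \<Rightarrow> (real \<Rightarrow> real) \<Rightarrow> (real \<Rightarrow> real) \<Rightarrow> real \<Rightarrow> real" where
  "cumH_lt g \<rho> \<sigma> t = (\<integral>x. indicator {0..<t} x * exp (- ra g * x) \<partial>stieltjes \<rho>)
     + (LBINT x:{0..<t}. ra g * exp (- ra g * x) * (1 - \<rho> x - \<sigma> x))"

definition cumL :: "params \<Rightarrow> (real \<Rightarrow> real) \<Rightarrow> real \<Rightarrow> real" where
  "cumL g \<rho> t = (\<integral>x. indicator {0..t} x * exp (- rb g * x) \<partial>stieltjes \<rho>)"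

definition cumL_lt :: "params \<Rightarrow> (real \<Rightarrow> real) \<Rightarrow> real \<Rightarrow> real" where
  "cumL_lt g \<rho> t = (\<integral>x. indicator {0..<t} x * exp (- rb g * x) \<partial>stieltjes \<rho>)"

definition payR_H :: "params \<Rightarrow> (real \<Rightarrow> real) \<Rightarrow> (real \<Rightarrow> real) \<Rightarrow> real \<Rightarrow> real" where
  "payR_H g \<rho>' \<sigma>' t = uH g - dbH g * cumH_lt g \<rho>' \<sigma>' t
      - dlH g * (cumH g \<rho>' \<sigma>' t - cumH_lt g \<rho>' \<sigma>' t)"

definition payR_L :: "params \<Rightarrow> (real \<Rightarrow> real) \<Rightarrow> real \<Rightarrow> real" where
  "payR_L g \<rho>' t = uL g - dbL g * cumL_lt g \<rho>' t
      - dlL g * (cumL g \<rho>' t - cumL_lt g \<rho>' t)"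

text \<open>Expected payoff of a player using (rho, sigma) against an opponent using (rho', sigma'):
  expected action payoff minus c times expected time spent acquiring information.\<close>
definition payoff :: "params \<Rightarrow> (real \<Rightarrow> real) \<Rightarrow> (real \<Rightarrow> real) \<Rightarrow> (real \<Rightarrow> real) \<Rightarrow> (real \<Rightarrow> real) \<Rightarrow> real" where
  "payoff g \<rho> \<sigma> \<rho>' \<sigma>' =
     p0 g * ( (\<integral>t. indicator {0..} t * exp (- ra g * t) * payR_H g \<rho>' \<sigma>' t \<partial>stieltjes \<rho>)
            + (LBINT t:{0..}. ra g * exp (- ra g * t) * (1 - \<rho> t - \<sigma> t) * payR_H g \<rho>' \<sigma>' t)
            - cost g * (LBINT t:{0..}. exp (- ra g * t) * (1 - \<rho> t - \<sigma> t)) )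
   + (1 - p0 g) * ( (\<integral>t. indicator {0..} t * exp (- rb g * t) * payR_L g \<rho>' t \<partial>stieltjes \<rho>)
            - cost g * (LBINT t:{0..}. exp (- rb g * t) * (1 - \<rho> t - \<sigma> t)) )"

definition sym_equilibrium :: "params \<Rightarrow> (real \<Rightarrow> real) \<Rightarrow> (real \<Rightarrow> real) \<Rightarrow> bool" where
  "sym_equilibrium g \<rho> \<sigma> \<longleftrightarrow> is_strategy \<rho> \<sigma>
     \<and> (\<forall>\<rho>' \<sigma>'. is_strategy \<rho>' \<sigma>' \<longrightarrow> payoff g \<rho>' \<sigma>' \<rho> \<sigma> \<le> payoff g \<rho> \<sigma> \<rho> \<sigma>)"

end

theory Submission
  imports Defs "HOL-Probability.Distribution_Functions"
begin

text \<open>Continuity of \<open>\<rho>\<close> at \<open>t > 0\<close> means that the Stieltjes measure \<open>d\<rho>\<close> has no atom at \<open>t\<close>.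
  Suppose it had an atom of mass \<open>J > 0\<close>. In a symmetric equilibrium the opponent then also takes
  \<open>R\<close> at exactly \<open>t\<close> with positive probability, so in state \<open>H\<close> a player who takes \<open>R\<close> at \<open>t\<close>
  pays the simultaneity penalty on that atom. Moving the atom to a slightly earlier time \<open>s\<close>
  avoids this penalty, whose size per unit of moved mass is a positive multiple of \<open>J\<close>
  independent of \<open>s\<close>, while every other effect of the move (the changed probability of still
  being uninformed, the \<open>H\<close>-signals no longer awaited in \<open>[s, t)\<close>, the saved information cost)
  is either favourable or vanishes as \<open>s \<rightarrow> t\<close>. Hence the move is a profitable deviation.\<close>

lemma interval_measure_bounded_cdf:
  fixes G :: "real \<Rightarrow> real"
  assumes mono: "mono G" and rc: "\<And>a. continuous (at_right a) G"
    and neg: "\<And>x. x < 0 \<Longrightarrow> G x = 0" and bnd: "\<And>x. G x \<le> 1"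
  shows "finite_borel_measure (interval_measure G)" and "cdf (interval_measure G) = G"
proof -
  have "incseq (\<lambda>n. G (real n))" by (auto simp: incseq_def intro: monoD[OF mono])
  then obtain L where L: "(\<lambda>n. G (real n)) \<longlonglongrightarrow> L" "\<forall>i. G (real i) \<le> L"
    using incseq_convergent[of "\<lambda>n. G (real n)" 1] bnd by blast
  have "0 \<le> L" using L(2)[rule_format, of 0] neg[of "-1"] monoD[OF mono, of "-1" 0] by simp
  moreover have "(G \<longlongrightarrow> L) at_top"
    by (rule tendsto_at_topI_sequentially_real) (use mono L(1) in auto)
  moreover have "(G \<longlongrightarrow> 0) at_bot"
    by (rule tendsto_eventually) (auto simp: eventually_at_bot_linorder intro!: exI[of _ "-1"] neg)
  ultimately show fin: "finite_borel_measure (interval_measure G)"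
    using finite_borel_measure_interval_measure[OF _ rc] mono by (auto simp: mono_def)
  interpret M: finite_borel_measure "interval_measure G" by (rule fin)
  have diff: "cdf (interval_measure G) y - cdf (interval_measure G) x = G y - G x" if "x < y" for x y
    using M.cdf_diff_eq[OF that] measure_interval_measure_Ioc[of x y G] that mono rc
    by (auto simp: mono_def)
  have zero: "cdf (interval_measure G) a = 0" if "a < 0" for a
  proof -
    have "eventually (\<lambda>y. cdf (interval_measure G) y = cdf (interval_measure G) a) at_bot"
      unfolding eventually_at_bot_linorder
      using diff neg \<open>a < 0\<close> by (intro exI[of _ "a - 1"]) (smt (verit))
    then have "(cdf (interval_measure G) \<longlongrightarrow> cdf (interval_measure G) a) at_bot"
      by (rule tendsto_eventually)
    then show ?thesis
      using M.cdf_lim_at_bot tendsto_unique[OF trivial_limit_at_bot_linorder] by blast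
  qed
  show "cdf (interval_measure G) = G"
  proof
    fix x
    show "cdf (interval_measure G) x = G x"
      using zero[of x] neg[of x] diff[of "-1" x] zero[of "-1"] neg[of "-1"]
      by (cases "x < 0") auto
  qed
qed

definition zero_extension :: "(real \<Rightarrow> real) \<Rightarrow> real \<Rightarrow> real" where
  "zero_extension F x = (if x < 0 then 0 else F x)"

lemma stieltjes_eq_interval_measure: "stieltjes F = interval_measure (zero_extension F)"
  unfolding stieltjes_def zero_extension_def by simp

lemma sets_stieltjes [simp, measurable_cong]: "sets (stieltjes F) = sets borel"
  unfolding stieltjes_def by simp

lemma mono_zero_extension:
  assumes "mono_on {0..} F" "\<forall>t\<ge>0. 0 \<le> F t"
  shows "mono (zero_extension F)"
  using assms by (auto simp: mono_def mono_on_def zero_extension_def)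

lemma borel_measurable_zero_extension:
  assumes "mono_on {0..} F" "\<forall>t\<ge>0. 0 \<le> F t"
  shows "zero_extension F \<in> borel_measurable borel"
  using mono_zero_extension[OF assms] by (rule borel_measurable_mono)

lemma continuous_at_right_zero_extension:
  assumes "\<forall>t\<ge>0. continuous (at_right t) F"
  shows "continuous (at_right a) (zero_extension F)"
proof (cases "a < 0")
  case True
  have "eventually (\<lambda>y. zero_extension F y = zero_extension F a) (at_right a)"
    unfolding eventually_at_right_field using True
    by (intro exI[of _ 0]) (auto simp: zero_extension_def)
  then show ?thesis unfolding continuous_within by (rule tendsto_eventually)
next
  case False
  have "eventually (\<lambda>y. F y = zero_extension F y) (at_right a)"
    unfolding eventually_at_right_field using False
    by (intro exI[of _ "a + 1"]) (auto simp: zero_extension_def)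
  moreover have "(F \<longlongrightarrow> F a) (at_right a)"
    using assms False unfolding continuous_within by auto
  ultimately show ?thesis
    using False tendsto_cong unfolding continuous_within zero_extension_def by fastforce
qed

lemma strategy_bounds:
  assumes "is_strategy \<rho> \<sigma>" "0 \<le> t"
  shows "0 \<le> \<rho> t" "\<rho> t \<le> 1" "0 \<le> \<sigma> t" "\<sigma> t \<le> 1" "\<rho> t + \<sigma> t \<le> 1"
  using assms unfolding is_strategy_def by blast+

lemma stieltjes_strategy:
  assumes "is_strategy \<rho> \<sigma>"
  shows "finite_borel_measure (stieltjes \<rho>)" and "cdf (stieltjes \<rho>) = zero_extension \<rho>"
proof -
  have "mono (zero_extension \<rho>)" "\<And>a. continuous (at_right a) (zero_extension \<rho>)"
    using assms mono_zero_extension continuous_at_right_zero_extension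
    unfolding is_strategy_def by auto
  moreover have "\<And>x. zero_extension \<rho> x \<le> 1"
    using strategy_bounds[OF assms] by (simp add: zero_extension_def)
  ultimately show "finite_borel_measure (stieltjes \<rho>)" "cdf (stieltjes \<rho>) = zero_extension \<rho>"
    unfolding stieltjes_eq_interval_measure
    by (auto intro!: interval_measure_bounded_cdf simp: zero_extension_def)
qed

lemma borel_measurable_zero_extension_strategy:
  assumes "is_strategy \<rho> \<sigma>"
  shows "zero_extension \<rho> \<in> borel_measurable borel" "zero_extension \<sigma> \<in> borel_measurable borel"
  using assms borel_measurable_zero_extension unfolding is_strategy_def by auto

lemma isCont_strategy_if_no_atom:
  assumes st: "is_strategy \<rho> \<sigma>" and "0 < t" "measure (stieltjes \<rho>) {t} = 0"
  shows "isCont \<rho> t"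
proof -
  interpret M: finite_borel_measure "stieltjes \<rho>" using stieltjes_strategy[OF st] by simp
  have "isCont (zero_extension \<rho>) t"
    using M.isCont_cdf assms(3) stieltjes_strategy(2)[OF st] by simp
  moreover have "eventually (\<lambda>x. zero_extension \<rho> x = \<rho> x) (nhds t)"
    using eventually_nhds_in_open[of "{0<..}" t] \<open>0 < t\<close>
    by (auto elim!: eventually_mono simp: zero_extension_def)
  ultimately show ?thesis using isCont_cong by blast
qed

lemma strategy_atom_le_increment:
  assumes st: "is_strategy \<rho> \<sigma>" and "0 \<le> x" "x < t" "t \<le> y"
  shows "\<rho> x + measure (stieltjes \<rho>) {t} \<le> \<rho> y"
proof -
  interpret M: finite_borel_measure "stieltjes \<rho>" using stieltjes_strategy[OF st] by simp
  have "measure (stieltjes \<rho>) {t} \<le> measure (stieltjes \<rho>) {x<..y}"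
    using assms by (intro M.finite_measure_mono) auto
  also have "\<dots> = cdf (stieltjes \<rho>) y - cdf (stieltjes \<rho>) x"
    using assms by (intro M.cdf_diff_eq[symmetric]) auto
  finally show ?thesis using stieltjes_strategy(2)[OF st] assms by (auto simp: zero_extension_def)
qed

lemma continuous_at_right_indicator_atLeastLessThan:
  fixes s t x :: real
  shows "continuous (at_right x) (indicator {s..<t} :: real \<Rightarrow> real)"
proof -
  have "eventually (\<lambda>y. indicator {s..<t} y = (indicator {s..<t} x :: real)) (at_right x)"
    unfolding eventually_at_right_field
    by (cases "x < s"; cases "x < t")
       (auto intro: exI[of _ s] exI[of _ t] exI[of _ "x + 1"] simp: indicator_def)
  then show ?thesis unfolding continuous_within by (rule tendsto_eventually)
qed

definition shift_atom :: "(real \<Rightarrow> real) \<Rightarrow> real \<Rightarrow> real \<Rightarrow> real \<Rightarrow> real" where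
  "shift_atom \<rho> s t x = \<rho> x + measure (stieltjes \<rho>) {t} * indicator {s..<t} x"

lemma is_strategy_shift_atom:
  assumes st: "is_strategy \<rho> \<sigma>" and s: "0 \<le> s" "s < t"
  shows "is_strategy (shift_atom \<rho> s t) \<sigma>"
proof -
  define J where "J = measure (stieltjes \<rho>) {t}"
  have J: "0 \<le> J" unfolding J_def by simp
  have step: "\<rho> x + J \<le> \<rho> y" if "0 \<le> x" "x < t" "t \<le> y" for x y
    using strategy_atom_le_increment[OF st that] unfolding J_def .
  have mono: "mono_on {0..} \<rho>" "mono_on {0..} \<sigma>"
    and rc: "\<forall>x\<ge>0. continuous (at_right x) \<rho> \<and> continuous (at_right x) \<sigma>"
    using st unfolding is_strategy_def by auto
  note bnd = strategy_bounds[OF st]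
  have "mono_on {0..} (shift_atom \<rho> s t)"
  proof (rule mono_onI)
    fix x y :: real assume xy: "x \<in> {0..}" "y \<in> {0..}" "x \<le> y"
    then show "shift_atom \<rho> s t x \<le> shift_atom \<rho> s t y"
      using mono_onD[OF mono(1) xy] step[of x y] J
      unfolding shift_atom_def J_def[symmetric] by (auto simp: indicator_def)
  qed
  moreover have "continuous (at_right x) (shift_atom \<rho> s t)" if "0 \<le> x" for x
    unfolding shift_atom_def[abs_def] using rc that
    by (intro continuous_intros continuous_at_right_indicator_atLeastLessThan) auto
  moreover have "0 \<le> shift_atom \<rho> s t x \<and> shift_atom \<rho> s t x \<le> 1
      \<and> shift_atom \<rho> s t x + \<sigma> x \<le> 1" if "0 \<le> x" for x
  proof (cases "x \<in> {s..<t}")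
    case True
    then have "\<rho> x + J \<le> \<rho> t" "\<sigma> x \<le> \<sigma> t"
      using step[of x t] mono_onD[OF mono(2)] that by auto
    then show ?thesis
      using True J bnd[OF that] bnd[of t] that unfolding shift_atom_def J_def[symmetric] by simp
  next
    case False
    then show ?thesis using bnd[OF that] unfolding shift_atom_def by simp
  qed
  moreover have "0 \<le> \<sigma> x \<and> \<sigma> x \<le> 1" if "0 \<le> x" for x
    using bnd[OF that] by simp
  ultimately show ?thesis
    using mono(2) rc unfolding is_strategy_def by blast
qed

lemma stieltjes_shift_atom:
  assumes st: "is_strategy \<rho> \<sigma>" and s: "0 \<le> s" "s < t"
  shows "stieltjes (shift_atom \<rho> s t) = distr (stieltjes \<rho>) borel (\<lambda>y. if y = t then s else y)"
proof (rule cdf_unique')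
  interpret M: finite_borel_measure "stieltjes \<rho>" using stieltjes_strategy[OF st] by simp
  have meas: "(\<lambda>y::real. if y = t then s else y) \<in> measurable (stieltjes \<rho>) borel"
    by measurable
  interpret D: finite_measure "distr (stieltjes \<rho>) borel (\<lambda>y. if y = t then s else y)"
    by (rule M.finite_measure_distr[OF meas])
  show "finite_borel_measure (distr (stieltjes \<rho>) borel (\<lambda>y. if y = t then s else y))"
    by unfold_locales simp
  have sts: "is_strategy (shift_atom \<rho> s t) \<sigma>" by (rule is_strategy_shift_atom[OF st s])
  show "finite_borel_measure (stieltjes (shift_atom \<rho> s t))" by (rule stieltjes_strategy[OF sts])
  show "cdf (stieltjes (shift_atom \<rho> s t)) = cdf (distr (stieltjes \<rho>) borel (\<lambda>y. if y = t then s else y))"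
  proof
    fix x
    have "(\<lambda>y. if y = t then s else y) -` {..x} = (if x \<in> {s..<t} then {t} \<union> {..x} else {..x})"
      using s by (auto split: if_splits)
    then have "cdf (distr (stieltjes \<rho>) borel (\<lambda>y. if y = t then s else y)) x
        = measure (stieltjes \<rho>) (if x \<in> {s..<t} then {t} \<union> {..x} else {..x})"
      unfolding cdf_def by (simp add: measure_distr[OF meas])
    also have "\<dots> = cdf (stieltjes \<rho>) x + measure (stieltjes \<rho>) {t} * indicator {s..<t} x"
      using M.finite_measure_Union[of "{t}" "{..x}"] unfolding cdf_def by (auto simp: indicator_def)
    also have "\<dots> = zero_extension \<rho> x + measure (stieltjes \<rho>) {t} * indicator {s..<t} x"
      by (simp add: stieltjes_strategy(2)[OF st])
    also have "\<dots> = cdf (stieltjes (shift_atom \<rho> s t)) x"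
      using stieltjes_strategy(2)[OF sts] s by (simp add: shift_atom_def zero_extension_def)
    finally show "cdf (stieltjes (shift_atom \<rho> s t)) x
        = cdf (distr (stieltjes \<rho>) borel (\<lambda>y. if y = t then s else y)) x" by simp
  qed
qed

lemma integral_stieltjes_shift_atom:
  fixes f :: "real \<Rightarrow> real"
  assumes st: "is_strategy \<rho> \<sigma>" and s: "0 \<le> s" "s < t"
    and f: "f \<in> borel_measurable borel" and f_bound: "\<And>x. \<bar>f x\<bar> \<le> K"
  shows "(\<integral>x. f x \<partial>stieltjes (shift_atom \<rho> s t))
       = (\<integral>x. f x \<partial>stieltjes \<rho>) + measure (stieltjes \<rho>) {t} * (f s - f t)"
proof -
  interpret M: finite_borel_measure "stieltjes \<rho>" using stieltjes_strategy[OF st] by simp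
  have meas: "(\<lambda>y::real. if y = t then s else y) \<in> measurable (stieltjes \<rho>) borel"
    by measurable
  have int_f: "integrable (stieltjes \<rho>) f"
    using f f_bound by (intro M.integrable_const_bound[where B=K]) auto
  have "(\<integral>x. f x \<partial>stieltjes (shift_atom \<rho> s t)) = (\<integral>x. f (if x = t then s else x) \<partial>stieltjes \<rho>)"
    unfolding stieltjes_shift_atom[OF st s] by (rule integral_distr[OF meas f])
  also have "\<dots> = (\<integral>x. f x + (f s - f t) * indicator {t} x \<partial>stieltjes \<rho>)"
    by (intro Bochner_Integration.integral_cong) (auto simp: indicator_def)
  also have "\<dots> = (\<integral>x. f x \<partial>stieltjes \<rho>) + measure (stieltjes \<rho>) {t} * (f s - f t)"
  proof (subst Bochner_Integration.integral_add)
    show "integrable (stieltjes \<rho>) (\<lambda>x. (f s - f t) * indicator {t} x)"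
      by (intro M.integrable_const_bound[where B="\<bar>f s - f t\<bar>"]) (auto simp: indicator_def)
  qed (use int_f in auto)
  finally show ?thesis .
qed

lemma set_integral_shift_atom:
  fixes w :: "real \<Rightarrow> real"
  assumes s: "0 \<le> s"
    and int_w: "set_integrable lborel {s..<t} w"
    and int_surv: "set_integrable lborel {0..} (\<lambda>x. w x * (1 - \<rho> x - \<sigma> x))"
  shows "(LBINT x:{0..}. w x * (1 - shift_atom \<rho> s t x - \<sigma> x))
       = (LBINT x:{0..}. w x * (1 - \<rho> x - \<sigma> x)) - measure (stieltjes \<rho>) {t} * (LBINT x:{s..<t}. w x)"
proof -
  define J where "J = measure (stieltjes \<rho>) {t}"
  have "(\<lambda>x. indicator {0..} x *\<^sub>R (w x * (1 - shift_atom \<rho> s t x - \<sigma> x)))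
      = (\<lambda>x. indicator {0..} x *\<^sub>R (w x * (1 - \<rho> x - \<sigma> x)) - J * (indicator {s..<t} x *\<^sub>R w x))"
    using s by (auto simp: fun_eq_iff shift_atom_def J_def indicator_def algebra_simps)
  then show ?thesis
    using int_w int_surv unfolding set_lebesgue_integral_def set_integrable_def J_def[symmetric]
    by (simp add: Bochner_Integration.integral_diff)
qed

lemma set_integrable_exp_minus:
  fixes c :: real
  assumes "0 < c"
  shows "set_integrable lborel {0..} (\<lambda>x. exp (- c * x))"
proof -
  have "(\<lambda>x. exp (- c * x)) absolutely_integrable_on {0..}"
    using assms by (intro nonnegative_absolutely_integrable_1 integrable_on_exp_minus_to_infinity) auto
  then show ?thesis
    unfolding set_integrable_def by (subst (asm) integrable_completion) auto
qed

lemma set_integrable_exp_dominated: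
  fixes f :: "real \<Rightarrow> real"
  assumes "0 < c" "set_borel_measurable lborel {0..} f" "\<And>x. 0 \<le> x \<Longrightarrow> \<bar>f x\<bar> \<le> K * exp (- c * x)"
  shows "set_integrable lborel {0..} f"
proof (rule set_integrable_bound[OF _ assms(2)])
  show "set_integrable lborel {0..} (\<lambda>x. K * exp (- c * x))"
    using set_integrable_exp_minus[OF assms(1)] by simp
  show "AE x in lborel. x \<in> {0..} \<longrightarrow> norm (f x) \<le> norm (K * exp (- c * x))"
    using assms(3) by (auto intro: order_trans[OF _ abs_ge_self])
qed

lemma set_integrable_survival:
  fixes w :: "real \<Rightarrow> real"
  assumes st: "is_strategy \<rho> \<sigma>" and c: "0 < c" and w: "w \<in> borel_measurable borel"
    and w_bound: "\<And>x. 0 \<le> x \<Longrightarrow> \<bar>w x\<bar> \<le> K * exp (- c * x)"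
  shows "set_integrable lborel {0..} (\<lambda>x. w x * (1 - \<rho> x - \<sigma> x))"
proof (rule set_integrable_exp_dominated[OF c])
  note [measurable] = borel_measurable_zero_extension_strategy[OF st]
  have "(\<lambda>x. indicator {0..} x *\<^sub>R (w x * (1 - \<rho> x - \<sigma> x)))
      = (\<lambda>x. indicator {0..} x *\<^sub>R (w x * (1 - zero_extension \<rho> x - zero_extension \<sigma> x)))"
    by (auto simp: fun_eq_iff indicator_def zero_extension_def)
  then show "set_borel_measurable lborel {0..} (\<lambda>x. w x * (1 - \<rho> x - \<sigma> x))"
    unfolding set_borel_measurable_def using w by simp
  fix x :: real assume "0 \<le> x"
  then have "0 \<le> 1 - \<rho> x - \<sigma> x" "1 - \<rho> x - \<sigma> x \<le> 1"
    using strategy_bounds[OF st \<open>0 \<le> x\<close>] by auto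
  then have "\<bar>w x * (1 - \<rho> x - \<sigma> x)\<bar> \<le> \<bar>w x\<bar>"
    by (auto simp: abs_mult intro: mult_left_le)
  also have "\<dots> \<le> K * exp (- c * x)" using w_bound \<open>0 \<le> x\<close> .
  finally show "\<bar>w x * (1 - \<rho> x - \<sigma> x)\<bar> \<le> K * exp (- c * x)" .
qed

lemma set_integral_survival_mono:
  fixes w :: "real \<Rightarrow> real"
  assumes st: "is_strategy \<rho> \<sigma>" and c: "0 < c" and w: "w \<in> borel_measurable borel"
    and w_bound: "\<And>x. 0 \<le> x \<Longrightarrow> 0 \<le> w x \<and> w x \<le> K * exp (- c * x)"
    and AB: "A \<in> sets borel" "B \<in> sets borel" "A \<subseteq> B" "B \<subseteq> {0..}"
  shows "(LBINT x:A. w x * (1 - \<rho> x - \<sigma> x)) \<le> (LBINT x:B. w x * (1 - \<rho> x - \<sigma> x))"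
proof -
  have int: "set_integrable lborel {0..} (\<lambda>x. w x * (1 - \<rho> x - \<sigma> x))"
    using w_bound by (intro set_integrable_survival[OF st c w]) auto
  have nonneg: "0 \<le> w x * (1 - \<rho> x - \<sigma> x)" if "0 \<le> x" for x
    using w_bound[OF that] strategy_bounds[OF st that] by simp
  show ?thesis
    unfolding set_lebesgue_integral_def
  proof (rule integral_mono)
    show "integrable lborel (\<lambda>x. indicator A x *\<^sub>R (w x * (1 - \<rho> x - \<sigma> x)))"
      "integrable lborel (\<lambda>x. indicator B x *\<^sub>R (w x * (1 - \<rho> x - \<sigma> x)))"
      using set_integrable_subset[OF int] AB unfolding set_integrable_def by auto
    fix x
    show "indicator A x *\<^sub>R (w x * (1 - \<rho> x - \<sigma> x)) \<le> indicator B x *\<^sub>R (w x * (1 - \<rho> x - \<sigma> x))"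
      using AB nonneg[of x] by (auto simp: indicator_def)
  qed
qed

lemma integrable_indicator_exp:
  fixes c :: real
  assumes "finite_measure M" "sets M = sets borel" "0 \<le> c" "A \<in> sets borel" "A \<subseteq> {0..}"
  shows "integrable M (\<lambda>x. indicator A x * exp (- c * x))"
proof -
  interpret finite_measure M by fact
  show ?thesis
  proof (rule integrable_const_bound[where B=1])
    show "AE x in M. norm (indicator A x * exp (- c * x)) \<le> 1"
      using assms by (auto simp: indicator_def intro!: AE_I2 mult_nonneg_nonneg)
    show "(\<lambda>x. indicator A x * exp (- c * x)) \<in> borel_measurable M"
      using assms by (simp add: measurable_cong_sets[OF assms(2) refl])
  qed
qed

lemma integral_indicator_exp_mono:
  fixes c :: real
  assumes "finite_measure M" "sets M = sets borel" "0 \<le> c"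
    and AB: "A \<in> sets borel" "B \<in> sets borel" "A \<subseteq> B" "B \<subseteq> {0..}"
  shows "(\<integral>x. indicator A x * exp (- c * x) \<partial>M) \<le> (\<integral>x. indicator B x * exp (- c * x) \<partial>M)"
  using AB integrable_indicator_exp[OF assms(1-3)]
  by (intro integral_mono) (auto simp: indicator_def)

lemma integral_indicator_exp_atom:
  fixes c t :: real
  assumes M: "finite_measure M" "sets M = sets borel" "0 \<le> c" and "0 \<le> t"
  shows "(\<integral>x. indicator {0..t} x * exp (- c * x) \<partial>M) - (\<integral>x. indicator {0..<t} x * exp (- c * x) \<partial>M)
     = exp (- c * t) * measure M {t}"
proof -
  interpret finite_measure M by fact
  have "(\<integral>x. indicator {0..t} x * exp (- c * x) \<partial>M) - (\<integral>x. indicator {0..<t} x * exp (- c * x) \<partial>M)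
      = (\<integral>x. indicator {0..t} x * exp (- c * x) - indicator {0..<t} x * exp (- c * x) \<partial>M)"
    using \<open>0 \<le> t\<close> by (intro Bochner_Integration.integral_diff[symmetric] integrable_indicator_exp[OF M]) auto
  also have "\<dots> = (\<integral>x. exp (- c * t) * indicator {t} x \<partial>M)"
    using \<open>0 \<le> t\<close> by (intro Bochner_Integration.integral_cong) (auto simp: indicator_def)
  also have "\<dots> = exp (- c * t) * measure M {t}"
    using sets_eq_imp_space_eq[OF M(2)] by simp
  finally show ?thesis .
qed

definition cumH_on :: "params \<Rightarrow> (real \<Rightarrow> real) \<Rightarrow> (real \<Rightarrow> real) \<Rightarrow> real set \<Rightarrow> real" where
  "cumH_on g \<rho> \<sigma> A = (\<integral>x. indicator A x * exp (- ra g * x) \<partial>stieltjes \<rho>)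
     + (LBINT x:A. ra g * exp (- ra g * x) * (1 - \<rho> x - \<sigma> x))"

definition cumL_on :: "params \<Rightarrow> (real \<Rightarrow> real) \<Rightarrow> real set \<Rightarrow> real" where
  "cumL_on g \<rho> A = (\<integral>x. indicator A x * exp (- rb g * x) \<partial>stieltjes \<rho>)"

lemma cumH_eq_cumH_on:
  "cumH g \<rho> \<sigma> t = cumH_on g \<rho> \<sigma> {0..t}" "cumH_lt g \<rho> \<sigma> t = cumH_on g \<rho> \<sigma> {0..<t}"
  unfolding cumH_def cumH_lt_def cumH_on_def by simp_all

lemma cumL_eq_cumL_on: "cumL g \<rho> t = cumL_on g \<rho> {0..t}" "cumL_lt g \<rho> t = cumL_on g \<rho> {0..<t}"
  unfolding cumL_def cumL_lt_def cumL_on_def by simp_all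

lemma cumH_on_mono:
  assumes "standing g" and st: "is_strategy \<rho> \<sigma>"
    and AB: "A \<in> sets borel" "B \<in> sets borel" "A \<subseteq> B" "B \<subseteq> {0..}"
  shows "cumH_on g \<rho> \<sigma> A \<le> cumH_on g \<rho> \<sigma> B"
proof -
  have a: "0 < ra g" using \<open>standing g\<close> unfolding standing_def by simp
  have "finite_measure (stieltjes \<rho>)"
    using stieltjes_strategy(1)[OF st] by (simp add: finite_borel_measure_def)
  moreover have "(LBINT x:A. ra g * exp (- ra g * x) * (1 - \<rho> x - \<sigma> x))
      \<le> (LBINT x:B. ra g * exp (- ra g * x) * (1 - \<rho> x - \<sigma> x))"
    using a by (intro set_integral_survival_mono[OF st a _ _ AB, where K="ra g"]) auto
  ultimately show ?thesis
    unfolding cumH_on_def using a AB by (intro add_mono integral_indicator_exp_mono) auto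
qed

lemma cumL_on_mono:
  assumes "standing g" and st: "is_strategy \<rho> \<sigma>"
    and AB: "A \<in> sets borel" "B \<in> sets borel" "A \<subseteq> B" "B \<subseteq> {0..}"
  shows "cumL_on g \<rho> A \<le> cumL_on g \<rho> B"
proof -
  have "finite_measure (stieltjes \<rho>)"
    using stieltjes_strategy(1)[OF st] by (simp add: finite_borel_measure_def)
  then show ?thesis
    unfolding cumL_on_def using \<open>standing g\<close> AB
    by (intro integral_indicator_exp_mono) (auto simp: standing_def)
qed

lemma cumH_atom:
  assumes "standing g" and st: "is_strategy \<rho> \<sigma>" and "0 \<le> t"
  shows "exp (- ra g * t) * measure (stieltjes \<rho>) {t} \<le> cumH g \<rho> \<sigma> t - cumH_lt g \<rho> \<sigma> t"
proof -
  have a: "0 < ra g" using \<open>standing g\<close> unfolding standing_def by simp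
  have "finite_measure (stieltjes \<rho>)"
    using stieltjes_strategy(1)[OF st] by (simp add: finite_borel_measure_def)
  from integral_indicator_exp_atom[OF this _ _ \<open>0 \<le> t\<close>, of "ra g"]
  have "(\<integral>x. indicator {0..t} x * exp (- ra g * x) \<partial>stieltjes \<rho>)
      - (\<integral>x. indicator {0..<t} x * exp (- ra g * x) \<partial>stieltjes \<rho>)
      = exp (- ra g * t) * measure (stieltjes \<rho>) {t}"
    using a by simp
  moreover have "(LBINT x:{0..<t}. ra g * exp (- ra g * x) * (1 - \<rho> x - \<sigma> x))
      \<le> (LBINT x:{0..t}. ra g * exp (- ra g * x) * (1 - \<rho> x - \<sigma> x))"
    using a by (intro set_integral_survival_mono[OF st a, where K="ra g"]) auto
  ultimately show ?thesis unfolding cumH_def cumH_lt_def by linarith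
qed

lemma cumH_bounds:
  assumes "standing g" "is_strategy \<rho> \<sigma>"
  shows "0 \<le> cumH_lt g \<rho> \<sigma> x" "cumH_lt g \<rho> \<sigma> x \<le> cumH g \<rho> \<sigma> x"
    "cumH g \<rho> \<sigma> x \<le> cumH_on g \<rho> \<sigma> {0..}"
    "s < t \<Longrightarrow> cumH g \<rho> \<sigma> s \<le> cumH_lt g \<rho> \<sigma> t"
proof -
  have "cumH_on g \<rho> \<sigma> {} = 0" by (simp add: cumH_on_def set_lebesgue_integral_def)
  then show "0 \<le> cumH_lt g \<rho> \<sigma> x"
    using cumH_on_mono[OF assms, of "{}" "{0..<x}"] by (simp add: cumH_eq_cumH_on subset_eq)
  show "cumH_lt g \<rho> \<sigma> x \<le> cumH g \<rho> \<sigma> x"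
    using cumH_on_mono[OF assms, of "{0..<x}" "{0..x}"] by (simp add: cumH_eq_cumH_on subset_eq)
  show "cumH g \<rho> \<sigma> x \<le> cumH_on g \<rho> \<sigma> {0..}"
    using cumH_on_mono[OF assms, of "{0..x}" "{0..}"] by (simp add: cumH_eq_cumH_on subset_eq)
  show "s < t \<Longrightarrow> cumH g \<rho> \<sigma> s \<le> cumH_lt g \<rho> \<sigma> t"
    using cumH_on_mono[OF assms, of "{0..s}" "{0..<t}"] by (simp add: cumH_eq_cumH_on subset_eq)
qed

lemma cumL_bounds:
  assumes "standing g" "is_strategy \<rho> \<sigma>"
  shows "0 \<le> cumL_lt g \<rho> x" "cumL_lt g \<rho> x \<le> cumL g \<rho> x" "cumL g \<rho> x \<le> cumL_on g \<rho> {0..}"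
    "s < t \<Longrightarrow> cumL g \<rho> s \<le> cumL_lt g \<rho> t"
proof -
  have "cumL_on g \<rho> {} = 0" by (simp add: cumL_on_def)
  then show "0 \<le> cumL_lt g \<rho> x"
    using cumL_on_mono[OF assms, of "{}" "{0..<x}"] by (simp add: cumL_eq_cumL_on subset_eq)
  show "cumL_lt g \<rho> x \<le> cumL g \<rho> x"
    using cumL_on_mono[OF assms, of "{0..<x}" "{0..x}"] by (simp add: cumL_eq_cumL_on subset_eq)
  show "cumL g \<rho> x \<le> cumL_on g \<rho> {0..}"
    using cumL_on_mono[OF assms, of "{0..x}" "{0..}"] by (simp add: cumL_eq_cumL_on subset_eq)
  show "s < t \<Longrightarrow> cumL g \<rho> s \<le> cumL_lt g \<rho> t"
    using cumL_on_mono[OF assms, of "{0..s}" "{0..<t}"] by (simp add: cumL_eq_cumL_on subset_eq)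
qed

lemma borel_measurable_payR_H:
  assumes "standing g" "is_strategy \<rho> \<sigma>"
  shows "payR_H g \<rho> \<sigma> \<in> borel_measurable borel"
proof -
  have [measurable]: "cumH g \<rho> \<sigma> \<in> borel_measurable borel" "cumH_lt g \<rho> \<sigma> \<in> borel_measurable borel"
    unfolding cumH_eq_cumH_on[abs_def]
    by (auto intro!: borel_measurable_mono cumH_on_mono[OF assms] simp: mono_def)
  show ?thesis unfolding payR_H_def[abs_def] by measurable
qed

lemma borel_measurable_payR_L:
  assumes "standing g" "is_strategy \<rho> \<sigma>"
  shows "payR_L g \<rho> \<in> borel_measurable borel"
proof -
  have [measurable]: "cumL g \<rho> \<in> borel_measurable borel" "cumL_lt g \<rho> \<in> borel_measurable borel"
    unfolding cumL_eq_cumL_on[abs_def]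
    by (auto intro!: borel_measurable_mono cumL_on_mono[OF assms] simp: mono_def)
  show ?thesis unfolding payR_L_def[abs_def] by measurable
qed

lemma payR_H_bounded:
  assumes "standing g" "is_strategy \<rho> \<sigma>"
  shows "\<exists>K. \<forall>x. \<bar>payR_H g \<rho> \<sigma> x\<bar> \<le> K"
proof -
  define T where "T = cumH_on g \<rho> \<sigma> {0..}"
  have "\<bar>payR_H g \<rho> \<sigma> x\<bar> \<le> \<bar>uH g\<bar> + dbH g * T + dlH g * T" for x
  proof -
    note c = cumH_bounds(1-3)[OF assms, of x, folded T_def]
    have "0 < dlH g" "0 < dbH g" using assms(1) by (auto simp: standing_def)
    then have "0 \<le> dbH g * cumH_lt g \<rho> \<sigma> x" "dbH g * cumH_lt g \<rho> \<sigma> x \<le> dbH g * T"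
      "0 \<le> dlH g * (cumH g \<rho> \<sigma> x - cumH_lt g \<rho> \<sigma> x)"
      "dlH g * (cumH g \<rho> \<sigma> x - cumH_lt g \<rho> \<sigma> x) \<le> dlH g * T"
      using c by (auto intro!: mult_left_mono)
    then show ?thesis unfolding payR_H_def by linarith
  qed
  then show ?thesis by blast
qed

lemma payR_L_bounded:
  assumes "standing g" "is_strategy \<rho> \<sigma>"
  shows "\<exists>K. \<forall>x. \<bar>payR_L g \<rho> x\<bar> \<le> K"
proof -
  define T where "T = cumL_on g \<rho> {0..}"
  have "\<bar>payR_L g \<rho> x\<bar> \<le> \<bar>uL g\<bar> + dbL g * T + dlL g * T" for x
  proof -
    note c = cumL_bounds(1-3)[OF assms, of x, folded T_def]
    have "0 < dlL g" "0 < dbL g" using assms(1) by (auto simp: standing_def)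
    then have "0 \<le> dbL g * cumL_lt g \<rho> x" "dbL g * cumL_lt g \<rho> x \<le> dbL g * T"
      "0 \<le> dlL g * (cumL g \<rho> x - cumL_lt g \<rho> x)"
      "dlL g * (cumL g \<rho> x - cumL_lt g \<rho> x) \<le> dlL g * T"
      using c by (auto intro!: mult_left_mono)
    then show ?thesis unfolding payR_L_def by linarith
  qed
  then show ?thesis by blast
qed

lemma payR_H_le:
  assumes "standing g" "is_strategy \<rho> \<sigma>"
  shows "payR_H g \<rho> \<sigma> x \<le> uH g"
proof -
  have "0 < dlH g" "0 < dbH g" using assms(1) by (auto simp: standing_def)
  then have "0 \<le> dbH g * cumH_lt g \<rho> \<sigma> x" "0 \<le> dlH g * (cumH g \<rho> \<sigma> x - cumH_lt g \<rho> \<sigma> x)"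
    using cumH_bounds(1,2)[OF assms, of x] by auto
  then show ?thesis unfolding payR_H_def by linarith
qed

lemma payR_H_before_ge:
  assumes "standing g" "is_strategy \<rho> \<sigma>" "s < t"
  shows "uH g - dbH g * cumH_lt g \<rho> \<sigma> t \<le> payR_H g \<rho> \<sigma> s"
proof -
  note c = cumH_bounds(2)[OF assms(1,2), of s] cumH_bounds(4)[OF assms(1,2) \<open>s < t\<close>]
  have "dlH g < dbH g" "0 < dlH g" using assms(1) by (auto simp: standing_def)
  then have "(dbH g - dlH g) * cumH_lt g \<rho> \<sigma> s \<le> (dbH g - dlH g) * cumH_lt g \<rho> \<sigma> t"
    "dlH g * cumH g \<rho> \<sigma> s \<le> dlH g * cumH_lt g \<rho> \<sigma> t"
    using c by (auto intro!: mult_left_mono)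
  then show ?thesis unfolding payR_H_def by (simp add: algebra_simps)
qed

lemma payR_L_before_ge:
  assumes "standing g" "is_strategy \<rho> \<sigma>" "s < t"
  shows "uL g - dbL g * cumL_lt g \<rho> t \<le> payR_L g \<rho> s"
proof -
  note c = cumL_bounds(2)[OF assms(1,2), of s] cumL_bounds(4)[OF assms(1,2) \<open>s < t\<close>]
  have "dlL g < dbL g" "0 < dlL g" using assms(1) by (auto simp: standing_def)
  then have "(dbL g - dlL g) * cumL_lt g \<rho> s \<le> (dbL g - dlL g) * cumL_lt g \<rho> t"
    "dlL g * cumL g \<rho> s \<le> dlL g * cumL_lt g \<rho> t"
    using c by (auto intro!: mult_left_mono)
  then show ?thesis unfolding payR_L_def by (simp add: algebra_simps)
qed

lemma payR_H_atom_le: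
  assumes "standing g" "is_strategy \<rho> \<sigma>" "0 \<le> t"
  shows "payR_H g \<rho> \<sigma> t
    \<le> uH g - dbH g * cumH_lt g \<rho> \<sigma> t - dlH g * (exp (- ra g * t) * measure (stieltjes \<rho>) {t})"
proof -
  have "0 < dlH g" using assms(1) by (auto simp: standing_def)
  then have "dlH g * (exp (- ra g * t) * measure (stieltjes \<rho>) {t})
      \<le> dlH g * (cumH g \<rho> \<sigma> t - cumH_lt g \<rho> \<sigma> t)"
    using cumH_atom[OF assms] by (intro mult_left_mono) auto
  then show ?thesis unfolding payR_H_def by linarith
qed

lemma payR_L_le:
  assumes "standing g" "is_strategy \<rho> \<sigma>"
  shows "payR_L g \<rho> t \<le> uL g - dbL g * cumL_lt g \<rho> t"
proof -
  have "0 < dlL g" using assms(1) by (auto simp: standing_def)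
  then have "0 \<le> dlL g * (cumL g \<rho> t - cumL_lt g \<rho> t)"
    using cumL_bounds(2)[OF assms, of t] by auto
  then show ?thesis unfolding payR_L_def by linarith
qed

definition payoff_H :: "params \<Rightarrow> (real \<Rightarrow> real) \<Rightarrow> (real \<Rightarrow> real) \<Rightarrow> (real \<Rightarrow> real) \<Rightarrow> (real \<Rightarrow> real) \<Rightarrow> real" where
  "payoff_H g \<rho> \<sigma> \<rho>' \<sigma>' =
     (\<integral>t. indicator {0..} t * exp (- ra g * t) * payR_H g \<rho>' \<sigma>' t \<partial>stieltjes \<rho>)
     + (LBINT t:{0..}. ra g * exp (- ra g * t) * (1 - \<rho> t - \<sigma> t) * payR_H g \<rho>' \<sigma>' t)
     - cost g * (LBINT t:{0..}. exp (- ra g * t) * (1 - \<rho> t - \<sigma> t))"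

definition payoff_L :: "params \<Rightarrow> (real \<Rightarrow> real) \<Rightarrow> (real \<Rightarrow> real) \<Rightarrow> (real \<Rightarrow> real) \<Rightarrow> real" where
  "payoff_L g \<rho> \<sigma> \<rho>' =
     (\<integral>t. indicator {0..} t * exp (- rb g * t) * payR_L g \<rho>' t \<partial>stieltjes \<rho>)
     - cost g * (LBINT t:{0..}. exp (- rb g * t) * (1 - \<rho> t - \<sigma> t))"

lemma payoff_eq_payoff_H_payoff_L:
  "payoff g \<rho> \<sigma> \<rho>' \<sigma>' = p0 g * payoff_H g \<rho> \<sigma> \<rho>' \<sigma>' + (1 - p0 g) * payoff_L g \<rho> \<sigma> \<rho>'"
  unfolding payoff_def payoff_H_def payoff_L_def ..

lemma set_integrable_exp_bounded:
  fixes f :: "real \<Rightarrow> real"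
  assumes "0 < c" "f \<in> borel_measurable borel" "\<And>x. \<bar>f x\<bar> \<le> K"
  shows "set_integrable lborel {0..} (\<lambda>x. exp (- c * x) * f x)"
  using assms by (intro set_integrable_exp_dominated[where K=K])
    (auto simp: set_borel_measurable_def abs_mult mult.commute intro: mult_right_mono)

lemma stopping_integral_shift_atom:
  fixes P :: "real \<Rightarrow> real"
  assumes st: "is_strategy \<rho> \<sigma>" and s: "0 \<le> s" "s < t" and c: "0 \<le> c"
    and P: "P \<in> borel_measurable borel" "\<And>x. \<bar>P x\<bar> \<le> K"
  shows "(\<integral>x. indicator {0..} x * exp (- c * x) * P x \<partial>stieltjes (shift_atom \<rho> s t))
    = (\<integral>x. indicator {0..} x * exp (- c * x) * P x \<partial>stieltjes \<rho>)
      + measure (stieltjes \<rho>) {t} * (exp (- c * s) * P s - exp (- c * t) * P t)"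
proof -
  have bound: "\<bar>indicator {0..} x * exp (- c * x) * P x\<bar> \<le> K" for x
  proof (cases "0 \<le> x")
    case True
    then have "exp (- c * x) \<le> 1" using c by (simp add: mult_nonneg_nonneg)
    then have "exp (- c * x) * \<bar>P x\<bar> \<le> \<bar>P x\<bar>" by (simp add: mult_left_le_one_le)
    then show ?thesis using True P(2)[of x] by (simp add: abs_mult)
  next
    case False
    then show ?thesis using P(2)[of x] by simp
  qed
  have "(\<lambda>x. indicator {0..} x * exp (- c * x) * P x) \<in> borel_measurable borel"
    using P(1) by measurable
  from integral_stieltjes_shift_atom[OF st s this bound] show ?thesis
    using s by simp
qed

lemma survival_integral_shift_atom:
  fixes P :: "real \<Rightarrow> real"
  assumes st: "is_strategy \<rho> \<sigma>" and s: "0 \<le> s" "s < t" and c: "0 < c"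
    and P: "P \<in> borel_measurable borel" "\<And>x. \<bar>P x\<bar> \<le> K"
  shows "(LBINT x:{0..}. exp (- c * x) * P x * (1 - shift_atom \<rho> s t x - \<sigma> x))
    = (LBINT x:{0..}. exp (- c * x) * P x * (1 - \<rho> x - \<sigma> x))
      - measure (stieltjes \<rho>) {t} * (LBINT x:{s..<t}. exp (- c * x) * P x)"
proof (rule set_integral_shift_atom[OF s(1)])
  have "set_integrable lborel {0..} (\<lambda>x. exp (- c * x) * P x)"
    by (rule set_integrable_exp_bounded[OF c P])
  then show "set_integrable lborel {s..<t} (\<lambda>x. exp (- c * x) * P x)"
    by (rule set_integrable_subset) (use s in auto)
  show "set_integrable lborel {0..} (\<lambda>x. exp (- c * x) * P x * (1 - \<rho> x - \<sigma> x))"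
    using P by (intro set_integrable_survival[OF st c, where K=K])
      (auto simp: abs_mult mult.commute intro: mult_right_mono)
qed

lemma payoff_H_shift_atom:
  assumes sg: "standing g" and st: "is_strategy \<rho> \<sigma>" and st': "is_strategy \<rho>' \<sigma>'"
    and s: "0 \<le> s" "s < t"
  shows "payoff_H g (shift_atom \<rho> s t) \<sigma> \<rho>' \<sigma>' = payoff_H g \<rho> \<sigma> \<rho>' \<sigma>'
    + measure (stieltjes \<rho>) {t} * (exp (- ra g * s) * payR_H g \<rho>' \<sigma>' s - exp (- ra g * t) * payR_H g \<rho>' \<sigma>' t
      - (LBINT x:{s..<t}. ra g * exp (- ra g * x) * payR_H g \<rho>' \<sigma>' x)
      + cost g * (LBINT x:{s..<t}. exp (- ra g * x)))"
proof -
  let ?P = "payR_H g \<rho>' \<sigma>'" and ?\<rho>s = "shift_atom \<rho> s t" and ?J = "measure (stieltjes \<rho>) {t}"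
  have a: "0 < ra g" using sg by (simp add: standing_def)
  have P: "?P \<in> borel_measurable borel" by (rule borel_measurable_payR_H[OF sg st'])
  obtain K where K: "\<And>x. \<bar>?P x\<bar> \<le> K" using payR_H_bounded[OF sg st'] by blast
  have aK: "\<bar>ra g * ?P x\<bar> \<le> ra g * K" for x
    using K[of x] a by (simp add: abs_mult)
  have stop: "(\<integral>x. indicator {0..} x * exp (- ra g * x) * ?P x \<partial>stieltjes ?\<rho>s)
      = (\<integral>x. indicator {0..} x * exp (- ra g * x) * ?P x \<partial>stieltjes \<rho>)
        + ?J * (exp (- ra g * s) * ?P s - exp (- ra g * t) * ?P t)"
    using a by (intro stopping_integral_shift_atom[OF st s _ P K]) simp
  have signal: "(LBINT x:{0..}. ra g * exp (- ra g * x) * (1 - ?\<rho>s x - \<sigma> x) * ?P x)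
      = (LBINT x:{0..}. ra g * exp (- ra g * x) * (1 - \<rho> x - \<sigma> x) * ?P x)
        - ?J * (LBINT x:{s..<t}. ra g * exp (- ra g * x) * ?P x)"
    using survival_integral_shift_atom[OF st s a _ aK] P by (simp add: ac_simps)
  have cost: "(LBINT x:{0..}. exp (- ra g * x) * (1 - ?\<rho>s x - \<sigma> x))
      = (LBINT x:{0..}. exp (- ra g * x) * (1 - \<rho> x - \<sigma> x)) - ?J * (LBINT x:{s..<t}. exp (- ra g * x))"
    using survival_integral_shift_atom[OF st s a, where P="\<lambda>_. 1" and K=1] by simp
  show ?thesis
    unfolding payoff_H_def stop signal cost by (simp add: algebra_simps)
qed

lemma payoff_L_shift_atom:
  assumes sg: "standing g" and st: "is_strategy \<rho> \<sigma>" and st': "is_strategy \<rho>' \<sigma>'"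
    and s: "0 \<le> s" "s < t"
  shows "payoff_L g (shift_atom \<rho> s t) \<sigma> \<rho>' = payoff_L g \<rho> \<sigma> \<rho>'
    + measure (stieltjes \<rho>) {t} * (exp (- rb g * s) * payR_L g \<rho>' s - exp (- rb g * t) * payR_L g \<rho>' t
      + cost g * (LBINT x:{s..<t}. exp (- rb g * x)))"
proof -
  let ?P = "payR_L g \<rho>'" and ?\<rho>s = "shift_atom \<rho> s t" and ?J = "measure (stieltjes \<rho>) {t}"
  have b: "0 < rb g" using sg by (simp add: standing_def)
  have P: "?P \<in> borel_measurable borel" by (rule borel_measurable_payR_L[OF sg st'])
  obtain K where K: "\<And>x. \<bar>?P x\<bar> \<le> K" using payR_L_bounded[OF sg st'] by blast
  have stop: "(\<integral>x. indicator {0..} x * exp (- rb g * x) * ?P x \<partial>stieltjes ?\<rho>s)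
      = (\<integral>x. indicator {0..} x * exp (- rb g * x) * ?P x \<partial>stieltjes \<rho>)
        + ?J * (exp (- rb g * s) * ?P s - exp (- rb g * t) * ?P t)"
    using b by (intro stopping_integral_shift_atom[OF st s _ P K]) simp
  have cost: "(LBINT x:{0..}. exp (- rb g * x) * (1 - ?\<rho>s x - \<sigma> x))
      = (LBINT x:{0..}. exp (- rb g * x) * (1 - \<rho> x - \<sigma> x)) - ?J * (LBINT x:{s..<t}. exp (- rb g * x))"
    using survival_integral_shift_atom[OF st s b, where P="\<lambda>_. 1" and K=1] by simp
  show ?thesis
    unfolding payoff_L_def stop cost by (simp add: algebra_simps)
qed

lemma signal_integral_le:
  assumes sg: "standing g" and st: "is_strategy \<rho> \<sigma>" and s: "0 \<le> s" "s \<le> t"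
  shows "(LBINT x:{s..<t}. ra g * exp (- ra g * x) * payR_H g \<rho> \<sigma> x) \<le> ra g * uH g * (t - s)"
proof -
  have a: "0 < ra g" and u: "0 < uH g" using sg by (auto simp: standing_def)
  obtain K where K: "\<And>x. \<bar>payR_H g \<rho> \<sigma> x\<bar> \<le> K" using payR_H_bounded[OF sg st] by blast
  have "set_integrable lborel {0..} (\<lambda>x. exp (- ra g * x) * (ra g * payR_H g \<rho> \<sigma> x))"
    using a K borel_measurable_payR_H[OF sg st]
    by (intro set_integrable_exp_bounded[where K="ra g * K"]) (auto simp: abs_mult)
  then have "set_integrable lborel {s..<t} (\<lambda>x. ra g * exp (- ra g * x) * payR_H g \<rho> \<sigma> x)"
    using s by (auto intro: set_integrable_subset simp: ac_simps)
  moreover have "ra g * exp (- ra g * x) * payR_H g \<rho> \<sigma> x \<le> ra g * uH g" if "x \<in> {s..<t}" for x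
  proof -
    have "exp (- ra g * x) * payR_H g \<rho> \<sigma> x \<le> uH g"
    proof (cases "0 \<le> payR_H g \<rho> \<sigma> x")
      case True
      have "exp (- ra g * x) \<le> 1" using that s a by simp
      then show ?thesis
        using True payR_H_le[OF sg st, of x] by (metis mult_left_le_one_le exp_ge_zero order_trans)
    next
      case False
      then show ?thesis using u by (smt (verit) exp_gt_zero mult_pos_neg)
    qed
    then show ?thesis using a by simp
  qed
  ultimately have "(LBINT x:{s..<t}. ra g * exp (- ra g * x) * payR_H g \<rho> \<sigma> x) \<le> (LBINT x:{s..<t}. ra g * uH g)"
    using s by (intro set_integral_mono) (auto simp: set_integrable_def)
  also have "\<dots> = ra g * uH g * (t - s)"
    using s by (simp add: set_integral_const)
  finally show ?thesis .
qed

lemma set_integral_exp_nonneg: "0 \<le> (LBINT x:A. exp (- c * x :: real))"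
  unfolding set_lebesgue_integral_def
  by (auto intro!: Bochner_Integration.integral_nonneg simp: indicator_def)

text \<open>Per unit of moved mass, a lower bound for the gain from moving the atom of \<open>\<rho>\<close> at \<open>t\<close> to \<open>s\<close>
  against the opponent \<open>(\<rho>, \<sigma>)\<close>. At \<open>s = t\<close> only the saved simultaneity penalty in state \<open>H\<close>
  remains, which is positive when the atom is.\<close>
definition atom_shift_gain :: "params \<Rightarrow> (real \<Rightarrow> real) \<Rightarrow> (real \<Rightarrow> real) \<Rightarrow> real \<Rightarrow> real \<Rightarrow> real" where
  "atom_shift_gain g \<rho> \<sigma> t s =
     p0 g * ((exp (- ra g * s) - exp (- ra g * t)) * (uH g - dbH g * cumH_lt g \<rho> \<sigma> t)
       - ra g * uH g * (t - s) + dlH g * exp (- ra g * t) * exp (- ra g * t) * measure (stieltjes \<rho>) {t})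
   + (1 - p0 g) * ((exp (- rb g * s) - exp (- rb g * t)) * (uL g - dbL g * cumL_lt g \<rho> t))"

lemma payoff_shift_atom_ge:
  assumes sg: "standing g" and st: "is_strategy \<rho> \<sigma>" and s: "0 \<le> s" "s < t"
  shows "payoff g \<rho> \<sigma> \<rho> \<sigma> + measure (stieltjes \<rho>) {t} * atom_shift_gain g \<rho> \<sigma> t s
    \<le> payoff g (shift_atom \<rho> s t) \<sigma> \<rho> \<sigma>"
proof -
  define J where "J = measure (stieltjes \<rho>) {t}"
  define QH where "QH = uH g - dbH g * cumH_lt g \<rho> \<sigma> t"
  define QL where "QL = uL g - dbL g * cumL_lt g \<rho> t"
  let ?a = "ra g" and ?b = "rb g" and ?PH = "payR_H g \<rho> \<sigma>" and ?PL = "payR_L g \<rho>"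
  let ?gH = "(exp (- ?a * s) - exp (- ?a * t)) * QH - ?a * uH g * (t - s)
      + dlH g * exp (- ?a * t) * exp (- ?a * t) * J"
  let ?gL = "(exp (- ?b * s) - exp (- ?b * t)) * QL"
  let ?BH = "exp (- ?a * s) * ?PH s - exp (- ?a * t) * ?PH t
      - (LBINT x:{s..<t}. ?a * exp (- ?a * x) * ?PH x) + cost g * (LBINT x:{s..<t}. exp (- ?a * x))"
  let ?BL = "exp (- ?b * s) * ?PL s - exp (- ?b * t) * ?PL t + cost g * (LBINT x:{s..<t}. exp (- ?b * x))"
  have t: "0 \<le> t" using s by simp
  have p: "0 < p0 g" "p0 g < 1" "0 < cost g" using sg by (auto simp: standing_def)
  have J: "0 \<le> J" unfolding J_def by simp
  have "exp (- ?a * s) * QH \<le> exp (- ?a * s) * ?PH s"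
    using payR_H_before_ge[OF sg st s(2)] unfolding QH_def by (intro mult_left_mono) auto
  moreover have "exp (- ?a * t) * ?PH t \<le> exp (- ?a * t) * QH - dlH g * exp (- ?a * t) * exp (- ?a * t) * J"
    using mult_left_mono[OF payR_H_atom_le[OF sg st t], of "exp (- ?a * t)"]
    unfolding QH_def J_def by (simp add: algebra_simps)
  moreover have "(LBINT x:{s..<t}. ?a * exp (- ?a * x) * ?PH x) \<le> ?a * uH g * (t - s)"
    using signal_integral_le[OF sg st] s by simp
  moreover have "0 \<le> cost g * (LBINT x:{s..<t}. exp (- ?a * x))"
    using p set_integral_exp_nonneg by simp
  ultimately have H: "?gH \<le> ?BH"
    unfolding left_diff_distrib by linarith
  have "exp (- ?b * s) * QL \<le> exp (- ?b * s) * ?PL s"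
    using payR_L_before_ge[OF sg st s(2)] unfolding QL_def by (intro mult_left_mono) auto
  moreover have "exp (- ?b * t) * ?PL t \<le> exp (- ?b * t) * QL"
    using payR_L_le[OF sg st] unfolding QL_def by (intro mult_left_mono) auto
  moreover have "0 \<le> cost g * (LBINT x:{s..<t}. exp (- ?b * x))"
    using p set_integral_exp_nonneg by simp
  ultimately have L: "?gL \<le> ?BL"
    unfolding left_diff_distrib by linarith
  have "J * atom_shift_gain g \<rho> \<sigma> t s = p0 g * (J * ?gH) + (1 - p0 g) * (J * ?gL)"
    unfolding atom_shift_gain_def J_def QH_def QL_def by (simp add: algebra_simps)
  also have "\<dots> \<le> p0 g * (J * ?BH) + (1 - p0 g) * (J * ?BL)"
    using add_mono[OF mult_left_mono[OF mult_left_mono[OF H J], of "p0 g"]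
        mult_left_mono[OF mult_left_mono[OF L J], of "1 - p0 g"]] p by simp
  also have "\<dots> = payoff g (shift_atom \<rho> s t) \<sigma> \<rho> \<sigma> - payoff g \<rho> \<sigma> \<rho> \<sigma>"
    unfolding payoff_eq_payoff_H_payoff_L payoff_H_shift_atom[OF sg st st s]
      payoff_L_shift_atom[OF sg st st s] J_def
    by (simp add: algebra_simps)
  finally show ?thesis unfolding J_def by simp
qed

theorem lemma1:
  fixes g :: params and \<rho> \<sigma> :: "real \<Rightarrow> real"
  assumes "standing g"
    and "sym_equilibrium g \<rho> \<sigma>"
  shows "\<forall>t>0. isCont \<rho> t"
proof (intro allI impI)
  fix t :: real assume "0 < t"
  have st: "is_strategy \<rho> \<sigma>"
    and best: "\<And>\<rho>' \<sigma>'. is_strategy \<rho>' \<sigma>' \<Longrightarrow> payoff g \<rho>' \<sigma>' \<rho> \<sigma> \<le> payoff g \<rho> \<sigma> \<rho> \<sigma>"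
    using assms(2) unfolding sym_equilibrium_def by auto
  show "isCont \<rho> t"
  proof (rule isCont_strategy_if_no_atom[OF st \<open>0 < t\<close>], rule ccontr)
    assume "measure (stieltjes \<rho>) {t} \<noteq> 0"
    then have J: "0 < measure (stieltjes \<rho>) {t}" using measure_nonneg order_le_neq_trans by metis
    have "0 < atom_shift_gain g \<rho> \<sigma> t t"
      using assms(1) J by (simp add: atom_shift_gain_def standing_def)
    moreover have "isCont (atom_shift_gain g \<rho> \<sigma> t) t"
      unfolding atom_shift_gain_def by (intro continuous_intros)
    then have "(atom_shift_gain g \<rho> \<sigma> t \<longlongrightarrow> atom_shift_gain g \<rho> \<sigma> t t) (at_left t)"
      unfolding isCont_def by (rule tendsto_mono[OF at_within_le_at])
    ultimately have "eventually (\<lambda>s. 0 < atom_shift_gain g \<rho> \<sigma> t s) (at_left t)"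
      by (rule order_tendstoD(1)[rotated])
    then have "eventually (\<lambda>s. 0 < atom_shift_gain g \<rho> \<sigma> t s \<and> s \<in> {0<..<t}) (at_left t)"
      using eventually_at_left_real[OF \<open>0 < t\<close>] by (rule eventually_conj)
    then obtain s where gain: "0 < atom_shift_gain g \<rho> \<sigma> t s" and s: "0 \<le> s" "s < t"
      using eventually_happens'[OF trivial_limit_at_left_real] by fastforce
    have "payoff g \<rho> \<sigma> \<rho> \<sigma> < payoff g (shift_atom \<rho> s t) \<sigma> \<rho> \<sigma>"
      using payoff_shift_atom_ge[OF assms(1) st s] mult_pos_pos[OF J gain] by linarith
    then show False
      using best[OF is_strategy_shift_atom[OF st s]] by simp
  qed
qed

end
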